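(* Let $n,\lambda,\mu$ be positive integers with $\mu>\lambda$, and let $\mathcal{A}$ be a path decomposition of $\lambda K_n$. Then $\lambda K_n$ is $1$-extendible with respect to $(\mathcal{A},\mu K_n)$ if and only if $|\mathcal{S}_0(\mathcal{A})|\le(\mu-\lambda)\frac{n(n-1)}{2}$. Moreover, if $\mathcal{A}$ is strong and this inequality holds, then $\lambda K_n$ is strongly $1$-extendible with respect to $(\mathcal{A},\mu K_n)$.
   Context: Graphs may have multiple edges. $\lambda K_n$ is the loopless multigraph on $n$ vertices with every pair of distinct vertices joined by exactly $\lambda$ edges; $\lambda K_n$ is regarded as a subgraph of $\mu K_n$ on the same vertex set, and $\mu K_n\setminus\lambda K_n$ denotes the graph obtained by deleting the edges of $\lambda K_n$. A decomposition of size $k$ of a graph $G$ is an ordered $k$-tuple $(G(1),\dots,G(k))$ of spanning subgraphs of $G$ (colour classes; possibly edgeless) with pairwise disjoint edge sets whose union is $E(G)$. A path decomposition is one in which every colour class is a vertex-disjoint union of paths and cycles (two parallel edges form a cycle of length 2); it is strong if no colour class contains a cycle. $\mathcal{S}_i(\mathcal{A})$ is the set of colour classes of $\mathcal{A}$ with exactly $i$ edges. For a graph $G\subseteq H$, a path decomposition $\mathcal{A}$ of $G$ with $k$ colour classes and a positive integer $\alpha$, $G$ is $\alpha$-extendible with respect to $(\mathcal{A},H)$ if there is a graph $F\subseteq H\setminus G$ and a path decomposition $\mathcal{A}^*$ of $G\cup F$ of size $k$ whose restriction to $G$ is $\mathcal{A}$ (i.e. $\mathcal{A}^*(i)\cap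 E(G)=\mathcal{A}(i)$ for all $i$) and each $\mathcal{A}^*(i)$ has at least $\alpha$ edges; it is strongly $\alpha$-extendible if moreover $\mathcal{A}$ and $\mathcal{A}^*$ are strong path decompositions. *)

theory Defs
  imports Main
begin

text \<open>Edges of the multigraph mu K_n on vertex set {0..<n}: an edge is a triple (u,v,j)
  with u < v < n and j < mu; j labels the j-th parallel copy of uv.  lambda K_n is the
  subgraph consisting of the copies with j < lambda.\<close>

type_synonym edge = "nat \<times> nat \<times> nat"

definition ends :: "edge \<Rightarrow> nat set" where
  "ends e = (case e of (u, v, j) \<Rightarrow> {u, v})"

definition Kn :: "nat \<Rightarrow> nat \<Rightarrow> edge set" where
  "Kn lam n = {(u, v, j). u < v \<and> v < n \<and> j < lam}"

definition verts :: "edge set \<Rightarrow> nat set" where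
  "verts X = \<Union> (ends ` X)"

definition is_path_edges :: "edge set \<Rightarrow> bool" where
  "is_path_edges X \<longleftrightarrow> (\<exists>vs es. length es \<ge> 1 \<and> length vs = Suc (length es) \<and>
     distinct vs \<and> distinct es \<and> set es = X \<and>
     (\<forall>i < length es. ends (es ! i) = {vs ! i, vs ! Suc i}))"

text \<open>X is the edge set of a cycle (length at least 2; two parallel edges form a 2-cycle).\<close>
definition is_cycle_edges :: "edge set \<Rightarrow> bool" where
  "is_cycle_edges X \<longleftrightarrow> (\<exists>vs es. length es \<ge> 2 \<and> length vs = length es \<and>
     distinct vs \<and> distinct es \<and> set es = X \<and>
     (\<forall>i < length es. ends (es ! i) = {vs ! i, vs ! (Suc i mod length vs)}))"

text \<open>The graph with edge set C is a vertex-disjoint union of paths and cycles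
  (isolated vertices are trivial paths and need not be listed).\<close>
definition paths_cycles_union :: "edge set \<Rightarrow> bool" where
  "paths_cycles_union C \<longleftrightarrow> (\<exists>P. finite P \<and> \<Union>P = C \<and>
     (\<forall>X\<in>P. is_path_edges X \<or> is_cycle_edges X) \<and>
     (\<forall>X\<in>P. \<forall>Y\<in>P. X \<noteq> Y \<longrightarrow> verts X \<inter> verts Y = {}))"

definition contains_cycle :: "edge set \<Rightarrow> bool" where
  "contains_cycle C \<longleftrightarrow> (\<exists>X \<subseteq> C. is_cycle_edges X)"

definition decomposition :: "edge set \<Rightarrow> nat \<Rightarrow> (nat \<Rightarrow> edge set) \<Rightarrow> bool" where
  "decomposition G k A \<longleftrightarrow> (\<forall>i<k. A i \<subseteq> G) \<and>
     (\<forall>i<k. \<forall>j<k. i \<noteq> j \<longrightarrow> A i \<inter> A j = {}) \<and> (\<Union>i<k. A i) = G"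

definition path_decomposition :: "edge set \<Rightarrow> nat \<Rightarrow> (nat \<Rightarrow> edge set) \<Rightarrow> bool" where
  "path_decomposition G k A \<longleftrightarrow> decomposition G k A \<and> (\<forall>i<k. paths_cycles_union (A i))"

definition strong_path_decomposition :: "edge set \<Rightarrow> nat \<Rightarrow> (nat \<Rightarrow> edge set) \<Rightarrow> bool" where
  "strong_path_decomposition G k A \<longleftrightarrow> path_decomposition G k A \<and> (\<forall>i<k. \<not> contains_cycle (A i))"

definition S_card :: "nat \<Rightarrow> nat \<Rightarrow> (nat \<Rightarrow> edge set) \<Rightarrow> nat" where
  "S_card s k A = card {i. i < k \<and> card (A i) = s}"

definition extendible ::
  "nat \<Rightarrow> edge set \<Rightarrow> edge set \<Rightarrow> nat \<Rightarrow> (nat \<Rightarrow> edge set) \<Rightarrow> bool" where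
  "extendible \<alpha> G H k A \<longleftrightarrow> (\<exists>F A'. F \<subseteq> H - G \<and> path_decomposition (G \<union> F) k A' \<and>
     (\<forall>i<k. A' i \<inter> G = A i) \<and> (\<forall>i<k. \<alpha> \<le> card (A' i)))"

definition strongly_extendible ::
  "nat \<Rightarrow> edge set \<Rightarrow> edge set \<Rightarrow> nat \<Rightarrow> (nat \<Rightarrow> edge set) \<Rightarrow> bool" where
  "strongly_extendible \<alpha> G H k A \<longleftrightarrow> strong_path_decomposition G k A \<and>
     (\<exists>F A'. F \<subseteq> H - G \<and> strong_path_decomposition (G \<union> F) k A' \<and>
     (\<forall>i<k. A' i \<inter> G = A i) \<and> (\<forall>i<k. \<alpha> \<le> card (A' i)))"

end

theory Submission
  imports Defs
begin

text \<open>Every colour class of an extension with at least one edge each must receive a new edge as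
  soon as it is empty in \<open>\<A>\<close>, and distinct classes receive distinct edges; so the empty classes
  inject into the \<open>(\<mu> - \<lambda>) n(n-1)/2\<close> edges of \<open>\<mu>K\<^sub>n \<setminus> \<lambda>K\<^sub>n\<close>.  Conversely, given such an
  injection, placing its edge (a single-edge path) into each empty class yields an extension
  whose classes are all nonempty, and no cycle is created.\<close>

lemma finite_Kn: "finite (Kn m n)"
  by (rule finite_subset[of _ "{..<n} \<times> {..<n} \<times> {..<m}"]) (auto simp: Kn_def)

lemma card_ordered_pairs_less: "card {(u::nat, v). u < v \<and> v < n} = n * (n - 1) div 2"
proof (induction n)
  case 0
  then show ?case by simp
next
  case (Suc n)
  have split: "{(u::nat, v). u < v \<and> v < Suc n} = {(u, v). u < v \<and> v < n} \<union> (\<lambda>u. (u, n)) ` {..<n}"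
    by auto
  have "finite {(u::nat, v). u < v \<and> v < n}"
    by (rule finite_subset[of _ "{..<n} \<times> {..<n}"]) auto
  then have "card {(u::nat, v). u < v \<and> v < Suc n} = n * (n - 1) div 2 + n"
    unfolding split using Suc by (subst card_Un_disjoint) (auto simp: card_image inj_on_def)
  also have "\<dots> = Suc n * (Suc n - 1) div 2"
    by (cases n) (auto simp: algebra_simps)
  finally show ?case .
qed

lemma card_Kn_diff:
  assumes "lam \<le> mu"
  shows "card (Kn mu n - Kn lam n) = (mu - lam) * (n * (n - 1) div 2)"
proof -
  have "Kn mu n - Kn lam n = (\<lambda>((u, v), j). (u, v, j)) ` ({(u, v). u < v \<and> v < n} \<times> {lam..<mu})"
    by (auto simp: Kn_def image_iff)
  then have "card (Kn mu n - Kn lam n) = card ({(u::nat, v). u < v \<and> v < n} \<times> {lam..<mu})"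
    by (simp add: card_image inj_on_def)
  then show ?thesis
    by (simp add: card_cartesian_product card_ordered_pairs_less)
qed

lemma paths_cycles_union_singleton_Kn:
  assumes "e \<in> Kn m n"
  shows "paths_cycles_union {e}"
proof -
  obtain u v j where e: "e = (u, v, j)" "u < v"
    using assms by (auto simp: Kn_def)
  have "is_path_edges {e}"
    unfolding is_path_edges_def
    by (rule exI[of _ "[u, v]"], rule exI[of _ "[e]"]) (use e in \<open>auto simp: ends_def\<close>)
  then show ?thesis
    unfolding paths_cycles_union_def by (intro exI[of _ "{{e}}"]) auto
qed

lemma not_contains_cycle_singleton: "\<not> contains_cycle {e}"
proof
  assume "contains_cycle {e}"
  then obtain X es where "X \<subseteq> {e}" "length es \<ge> 2" "distinct es" "set es = X"
    by (auto simp: contains_cycle_def is_cycle_edges_def)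
  then have "2 \<le> card X" "card X \<le> 1"
    using distinct_card[of es] card_mono[of "{e}" X] by auto
  then show False by simp
qed

definition empty_classes :: "nat \<Rightarrow> (nat \<Rightarrow> edge set) \<Rightarrow> nat set" where
  "empty_classes k A = {i. i < k \<and> A i = {}}"

lemma finite_empty_classes: "finite (empty_classes k A)"
  by (simp add: empty_classes_def)

lemma S_card_0_eq_card_empty_classes:
  assumes "\<forall>i<k. finite (A i)"
  shows "S_card 0 k A = card (empty_classes k A)"
  unfolding S_card_def empty_classes_def using assms by (metis card_0_eq)

lemma card_empty_classes_le_new_edges:
  assumes dec: "decomposition (G \<union> F) k A'" and restr: "\<forall>i<k. A' i \<inter> G = A i"
    and nonempty: "\<forall>i<k. A' i \<noteq> {}" and "finite F"
  shows "card (empty_classes k A) \<le> card (F - G)"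
proof -
  let ?Z = "empty_classes k A"
  define new where "new i = (SOME x. x \<in> A' i)" for i
  have new: "new i \<in> A' i \<and> new i \<in> F - G" if "i \<in> ?Z" for i
  proof -
    have "i < k" "A i = {}" using that by (auto simp: empty_classes_def)
    then have "new i \<in> A' i" "A' i \<inter> G = {}" "A' i \<subseteq> G \<union> F"
      using nonempty restr dec by (auto simp: new_def decomposition_def some_in_eq)
    then show ?thesis by blast
  qed
  have "inj_on new ?Z"
  proof (rule inj_onI)
    fix i j assume ij: "i \<in> ?Z" "j \<in> ?Z" "new i = new j"
    then have "new i \<in> A' i \<inter> A' j"
      using new by (metis IntI)
    moreover have "i < k" "j < k"
      using ij by (auto simp: empty_classes_def)
    ultimately show "i = j" using dec unfolding decomposition_def by blast
  qed
  moreover have "new ` ?Z \<subseteq> F - G" using new by blast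
  ultimately show ?thesis
    using card_inj_on_le \<open>finite F\<close> by blast
qed

lemma card_empty_classes_le_of_extendible:
  assumes ext: "extendible 1 G H k A" and "finite H"
  shows "card (empty_classes k A) \<le> card (H - G)"
proof -
  obtain F A' where F: "F \<subseteq> H - G" and pd: "path_decomposition (G \<union> F) k A'"
    and restr: "\<forall>i<k. A' i \<inter> G = A i" and card: "\<forall>i<k. 1 \<le> card (A' i)"
    using ext unfolding extendible_def by blast
  have "\<forall>i<k. A' i \<noteq> {}" using card by fastforce
  moreover have "finite F" using F \<open>finite H\<close> finite_subset by blast
  ultimately have "card (empty_classes k A) \<le> card (F - G)"
    using card_empty_classes_le_new_edges[of G F k A' A] pd restr
    by (simp add: path_decomposition_def)
  also have "\<dots> \<le> card (H - G)"
    using F \<open>finite H\<close> by (intro card_mono) auto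
  finally show ?thesis .
qed

definition fill_empty :: "nat \<Rightarrow> (nat \<Rightarrow> edge set) \<Rightarrow> (nat \<Rightarrow> edge) \<Rightarrow> nat \<Rightarrow> edge set" where
  "fill_empty k A g i = (if i \<in> empty_classes k A then {g i} else A i)"

lemma fill_empty_nonempty: "i < k \<Longrightarrow> fill_empty k A g i \<noteq> {}"
  by (simp add: fill_empty_def empty_classes_def)

lemma fill_empty_inter:
  assumes "\<forall>i<k. A i \<subseteq> G" "g ` empty_classes k A \<inter> G = {}" "i < k"
  shows "fill_empty k A g i \<inter> G = A i"
  using assms by (auto simp: fill_empty_def empty_classes_def)

lemma decomposition_fill_empty:
  assumes dec: "decomposition G k A" and inj: "inj_on g (empty_classes k A)"
    and new: "g ` empty_classes k A \<inter> G = {}"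
  shows "decomposition (G \<union> g ` empty_classes k A) k (fill_empty k A g)"
proof -
  let ?Z = "empty_classes k A"
  have sub: "\<forall>i<k. A i \<subseteq> G" and cover: "(\<Union>i<k. A i) = G"
    and disj: "\<forall>i<k. \<forall>j<k. i \<noteq> j \<longrightarrow> A i \<inter> A j = {}"
    using dec by (auto simp: decomposition_def)
  have "fill_empty k A g i \<inter> fill_empty k A g j = {}" if "i < k" "j < k" "i \<noteq> j" for i j
    using that sub disj new inj_onD[OF inj]
    by (auto simp: fill_empty_def empty_classes_def) blast+
  moreover have "(\<Union>i<k. fill_empty k A g i) = G \<union> g ` ?Z"
  proof
    show "(\<Union>i<k. fill_empty k A g i) \<subseteq> G \<union> g ` ?Z"
      using sub by (auto simp: fill_empty_def)
    show "G \<union> g ` ?Z \<subseteq> (\<Union>i<k. fill_empty k A g i)"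
      using cover by (force simp: fill_empty_def empty_classes_def)
  qed
  ultimately show ?thesis
    using sub by (auto simp: decomposition_def fill_empty_def)
qed

lemma fill_empty_path_extension:
  assumes pd: "path_decomposition (Kn lam n) k A"
    and le: "card (empty_classes k A) \<le> card (Kn mu n - Kn lam n)"
  obtains F A' where "F \<subseteq> Kn mu n - Kn lam n" "path_decomposition (Kn lam n \<union> F) k A'"
    "\<forall>i<k. A' i \<inter> Kn lam n = A i" "\<forall>i<k. 1 \<le> card (A' i)"
    "(\<forall>i<k. \<not> contains_cycle (A i)) \<Longrightarrow> \<forall>i<k. \<not> contains_cycle (A' i)"
proof -
  let ?Z = "empty_classes k A" and ?G = "Kn lam n"
  obtain g where g: "g ` ?Z \<subseteq> Kn mu n - ?G" "inj_on g ?Z"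
    using card_le_inj[OF finite_empty_classes _ le] finite_Kn by blast
  have dec: "decomposition ?G k A" and pcu: "\<forall>i<k. paths_cycles_union (A i)"
    using pd by (auto simp: path_decomposition_def)
  have new: "g ` ?Z \<inter> ?G = {}" using g(1) by blast
  have "paths_cycles_union (fill_empty k A g i)" if "i < k" for i
    using that pcu g(1) paths_cycles_union_singleton_Kn[of "g i" mu n] by (auto simp: fill_empty_def)
  then have "path_decomposition (?G \<union> g ` ?Z) k (fill_empty k A g)"
    using decomposition_fill_empty[OF dec g(2) new] by (simp add: path_decomposition_def)
  moreover have "\<forall>i<k. fill_empty k A g i \<inter> ?G = A i"
    using fill_empty_inter[OF _ new] dec by (auto simp: decomposition_def)
  moreover have "finite (fill_empty k A g i)" if "i < k" for i
    using that dec finite_subset[OF _ finite_Kn] by (auto simp: fill_empty_def decomposition_def)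
  then have "\<forall>i<k. 1 \<le> card (fill_empty k A g i)"
    using fill_empty_nonempty by (simp add: Suc_le_eq card_gt_0_iff)
  moreover have "(\<forall>i<k. \<not> contains_cycle (A i)) \<Longrightarrow> \<forall>i<k. \<not> contains_cycle (fill_empty k A g i)"
    using not_contains_cycle_singleton by (simp add: fill_empty_def)
  ultimately show ?thesis using that g(1) by blast
qed

theorem proposition1:
  fixes n lam mu k :: nat and A :: "nat \<Rightarrow> edge set"
  assumes "n > 0" and "lam > 0" and "mu > lam"
    and "path_decomposition (Kn lam n) k A"
  shows "(extendible 1 (Kn lam n) (Kn mu n) k A \<longleftrightarrow>
            S_card 0 k A \<le> (mu - lam) * (n * (n - 1) div 2))
       \<and> (strong_path_decomposition (Kn lam n) k A \<and>
            S_card 0 k A \<le> (mu - lam) * (n * (n - 1) div 2)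
          \<longrightarrow> strongly_extendible 1 (Kn lam n) (Kn mu n) k A)"
proof -
  let ?G = "Kn lam n" and ?D = "Kn mu n - Kn lam n"
  have "\<forall>i<k. finite (A i)"
    using assms(4) finite_subset[OF _ finite_Kn] by (auto simp: path_decomposition_def decomposition_def)
  then have count: "S_card 0 k A \<le> (mu - lam) * (n * (n - 1) div 2) \<longleftrightarrow> card (empty_classes k A) \<le> card ?D"
    using S_card_0_eq_card_empty_classes card_Kn_diff assms(3) by simp
  have "card (empty_classes k A) \<le> card ?D" if "extendible 1 ?G (Kn mu n) k A"
    using card_empty_classes_le_of_extendible[OF that finite_Kn] .
  moreover have "extendible 1 ?G (Kn mu n) k A \<and>
      (strong_path_decomposition ?G k A \<longrightarrow> strongly_extendible 1 ?G (Kn mu n) k A)"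
    if le: "card (empty_classes k A) \<le> card ?D"
  proof -
    obtain F A' where "F \<subseteq> ?D" "path_decomposition (?G \<union> F) k A'"
      "\<forall>i<k. A' i \<inter> ?G = A i" "\<forall>i<k. 1 \<le> card (A' i)"
      "(\<forall>i<k. \<not> contains_cycle (A i)) \<Longrightarrow> \<forall>i<k. \<not> contains_cycle (A' i)"
      using fill_empty_path_extension[OF assms(4) le] by blast
    then show ?thesis
      unfolding extendible_def strongly_extendible_def strong_path_decomposition_def by blast
  qed
  ultimately show ?thesis using count by blast
qed

end
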